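(* Let $\Gamma$ be a finite undirected simple graph with vertex set $\{x_1,\dots,x_n\}$ whose maximal vertex degree equals $n-2$ and such that exactly one vertex has degree $n-2$. Then the associated group $G_\Gamma$ has the $R_\infty$-property.
   Context: For a finite undirected simple graph $\Gamma$ with vertex set $\{x_1,\dots,x_n\}$ and edge set $E$, the group $G_\Gamma$ is defined by the presentation with generators $x_1,\dots,x_n$ and $y_{i,j}$ for each pair $i<j$ with $x_ix_j\notin E$, and relations $[x_j,x_i]=1$ if $x_ix_j\in E$; $[x_j,x_i]=y_{i,j}$ if $x_ix_j\notin E$ and $i<j$; and $[x_l,y_{i,j}]=1$ for all $l$ and all such $y_{i,j}$. For a group $G$ and $\varphi\in\mathrm{Aut}(G)$, elements $a,b$ are $\varphi$-conjugate if $a=cb\varphi(c)^{-1}$ for some $c\in G$; the number $R(\varphi)\in\mathbb{N}_0\cup\{\infty\}$ of equivalence classes is the Reidemeister number. The Reidemeister spectrum is $\mathrm{Spec}_R(G)=\{R(\varphi):\varphi\in\mathrm{Aut}(G)\}$, and $G$ has the $R_\infty$-property if $\mathrm{Spec}_R(G)=\{\infty\}$. Here $\mathbb{N}_0$ denotes the positive integers. *)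

theory Defs
  imports "HOL-Algebra.Group"
begin

text \<open>A word over a generator type is a list of letters (g, b), where b = True
  marks the inverse letter g^-1.\<close>

type_synonym 'g word = "('g \<times> bool) list"

definition words_over :: "'g set \<Rightarrow> 'g word set" where
  "words_over S = {w. \<forall>l\<in>set w. fst l \<in> S}"

inductive pres_eq :: "'g set \<Rightarrow> ('g word \<times> 'g word) set \<Rightarrow> 'g word \<Rightarrow> 'g word \<Rightarrow> bool"
  for S R where
  pe_refl: "w \<in> words_over S \<Longrightarrow> pres_eq S R w w"
| pe_sym: "pres_eq S R u v \<Longrightarrow> pres_eq S R v u"
| pe_trans: "pres_eq S R u v \<Longrightarrow> pres_eq S R v w \<Longrightarrow> pres_eq S R u w"
| pe_app: "pres_eq S R a b \<Longrightarrow> pres_eq S R c d \<Longrightarrow> pres_eq S R (a @ c) (b @ d)"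
| pe_cancel: "g \<in> S \<Longrightarrow> pres_eq S R [(g, e), (g, \<not> e)] []"
| pe_rel: "(u, v) \<in> R \<Longrightarrow> u \<in> words_over S \<Longrightarrow> v \<in> words_over S \<Longrightarrow> pres_eq S R u v"

definition pres_rel :: "'g set \<Rightarrow> ('g word \<times> 'g word) set \<Rightarrow> ('g word \<times> 'g word) set" where
  "pres_rel S R = {(u, v). pres_eq S R u v}"

definition presented_group :: "'g set \<Rightarrow> ('g word \<times> 'g word) set \<Rightarrow> ('g word set) monoid" where
  "presented_group S R =
     \<lparr> carrier = words_over S // pres_rel S R,
       mult = (\<lambda>A B. \<Union>a\<in>A. \<Union>b\<in>B. pres_rel S R `` {a @ b}),
       one = pres_rel S R `` {[]} \<rparr>"

text \<open>Finite simple graph with vertex set {1..n} (vertex x_i is i); edges are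
  2-element subsets of {1..n}.\<close>

definition simple_graph :: "nat \<Rightarrow> nat set set \<Rightarrow> bool" where
  "simple_graph n E \<longleftrightarrow> (\<forall>e\<in>E. \<exists>i j. e = {i, j} \<and> i \<noteq> j \<and> i \<in> {1..n} \<and> j \<in> {1..n})"

definition degree :: "nat \<Rightarrow> nat set set \<Rightarrow> nat \<Rightarrow> nat" where
  "degree n E i = card {j \<in> {1..n}. {i, j} \<in> E}"

datatype gen = X nat | Y nat nat

definition nonedge :: "nat \<Rightarrow> nat set set \<Rightarrow> nat \<Rightarrow> nat \<Rightarrow> bool" where
  "nonedge n E i j \<longleftrightarrow> i \<in> {1..n} \<and> j \<in> {1..n} \<and> i < j \<and> {i, j} \<notin> E"

definition gamma_gens :: "nat \<Rightarrow> nat set set \<Rightarrow> gen set" where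
  "gamma_gens n E = {X l | l. l \<in> {1..n}} \<union> {Y i j | i j. nonedge n E i j}"

text \<open>Commutator convention [a,b] = a^-1 b^-1 a b.\<close>

definition comm_word :: "gen \<Rightarrow> gen \<Rightarrow> gen word" where
  "comm_word a b = [(a, True), (b, True), (a, False), (b, False)]"

definition gamma_rels :: "nat \<Rightarrow> nat set set \<Rightarrow> (gen word \<times> gen word) set" where
  "gamma_rels n E =
      {(comm_word (X j) (X i), []) | i j. i \<in> {1..n} \<and> j \<in> {1..n} \<and> i < j \<and> {i, j} \<in> E}
    \<union> {(comm_word (X j) (X i), [(Y i j, False)]) | i j. nonedge n E i j}
    \<union> {(comm_word (X l) (Y i j), []) | l i j. l \<in> {1..n} \<and> nonedge n E i j}"

definition G_Gamma :: "nat \<Rightarrow> nat set set \<Rightarrow> gen word set monoid" where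
  "G_Gamma n E = presented_group (gamma_gens n E) (gamma_rels n E)"

definition twisted_classes :: "('a, 'b) monoid_scheme \<Rightarrow> ('a \<Rightarrow> 'a) \<Rightarrow> 'a set set" where
  "twisted_classes G \<phi> =
     (\<lambda>b. {a. \<exists>c\<in>carrier G. a = c \<otimes>\<^bsub>G\<^esub> b \<otimes>\<^bsub>G\<^esub> inv\<^bsub>G\<^esub> (\<phi> c)}) ` carrier G"

definition R_infty :: "('a, 'b) monoid_scheme \<Rightarrow> bool" where
  "R_infty G \<longleftrightarrow> (\<forall>\<phi>\<in>iso G G. infinite (twisted_classes G \<phi>))"

end

theory Submission
  imports Defs "HOL-Library.Function_Algebras" "Jordan_Normal_Form.Determinant"
begin

text \<open>\<open>G_Gamma\<close> is nilpotent of class two: it maps to a model \<open>\<int>\<^sup>n \<times> \<int>\<^sup>P\<close> whose first factor is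
  the abelianization and whose second factor, indexed by the non-edges, is central. An automorphism
  \<open>\<phi>\<close> induces integer matrices on both factors. Any additive invariant fixed by \<open>\<phi>\<close> is constant
  on twisted classes, so \<open>R(\<phi>) = \<infinity>\<close> as soon as the matrix on \<open>\<int>\<^sup>n\<close> has eigenvalue 1, or, when it
  has not, the matrix on the centre has eigenvalue 1.

  Let \<open>v\<close> be the vertex of degree \<open>n - 2\<close> and \<open>w\<close> its unique non-neighbour. As \<open>x\<^sub>v\<close> commutes
  with every \<open>x\<^sub>j\<close>, \<open>j \<noteq> w\<close>, and every other vertex has at least two non-neighbours, \<open>\<phi>(x\<^sub>v)\<close> is
  \<open>\<delta> x\<^sub>v\<close> modulo commutators and the \<open>w\<close>-column of the matrix on \<open>\<int>\<^sup>n\<close> is \<open>\<epsilon> e\<^sub>w\<close>, with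
  \<open>\<delta>, \<epsilon> = \<plusminus>1\<close>. If \<open>\<delta> = 1\<close> or \<open>\<epsilon> = 1\<close> the matrix on \<open>\<int>\<^sup>n\<close> has eigenvalue 1; otherwise
  the central part of \<open>\<phi>(y\<^sub>v\<^sub>w)\<close> is \<open>\<delta>\<epsilon> e\<^sub>v\<^sub>w = e\<^sub>v\<^sub>w\<close>, an eigenvector for 1 on the centre.\<close>

section \<open>Presented groups\<close>

lemma pres_eq_words_over: "pres_eq S R u v \<Longrightarrow> u \<in> words_over S \<and> v \<in> words_over S"
  by (induction rule: pres_eq.induct) (auto simp: words_over_def)

lemma words_over_Nil [simp]: "[] \<in> words_over S"
  and words_over_Cons [simp]: "l # w \<in> words_over S \<longleftrightarrow> fst l \<in> S \<and> w \<in> words_over S"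
  and words_over_append [simp]: "u @ w \<in> words_over S \<longleftrightarrow> u \<in> words_over S \<and> w \<in> words_over S"
  by (auto simp: words_over_def)

lemma equiv_pres_rel: "equiv (words_over S) (pres_rel S R)"
  unfolding equiv_def refl_on_def sym_def trans_def pres_rel_def
  by (auto intro: pe_refl pe_sym pe_trans dest: pres_eq_words_over)

definition word_class :: "'g set \<Rightarrow> ('g word \<times> 'g word) set \<Rightarrow> 'g word \<Rightarrow> 'g word set" where
  "word_class S R w = pres_rel S R `` {w}"

lemma word_class_eq_iff:
  assumes "u \<in> words_over S" "w \<in> words_over S"
  shows "word_class S R u = word_class S R w \<longleftrightarrow> pres_eq S R u w"
  using eq_equiv_class_iff[OF equiv_pres_rel assms]
  by (simp add: word_class_def pres_rel_def)

lemma word_class_eqI: "pres_eq S R u w \<Longrightarrow> word_class S R u = word_class S R w"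
  using word_class_eq_iff pres_eq_words_over by metis

lemma mem_word_class_iff: "u \<in> word_class S R w \<longleftrightarrow> pres_eq S R w u"
  by (simp add: word_class_def pres_rel_def)

lemma mem_word_class: "w \<in> words_over S \<Longrightarrow> w \<in> word_class S R w"
  by (simp add: mem_word_class_iff pe_refl)

lemma word_class_in_carrier: "w \<in> words_over S \<Longrightarrow> word_class S R w \<in> carrier (presented_group S R)"
  unfolding presented_group_def word_class_def by (auto intro: quotientI)

lemma carrier_presented_groupE:
  assumes "C \<in> carrier (presented_group S R)"
  obtains w where "w \<in> words_over S" "C = word_class S R w"
  using assms unfolding presented_group_def word_class_def by (auto elim: quotientE)

lemma one_presented_group: "\<one>\<^bsub>presented_group S R\<^esub> = word_class S R []"
  by (simp add: presented_group_def word_class_def)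

lemma mult_word_class:
  assumes "u \<in> words_over S" "w \<in> words_over S"
  shows "word_class S R u \<otimes>\<^bsub>presented_group S R\<^esub> word_class S R w = word_class S R (u @ w)"
proof -
  have "(\<Union>u'\<in>word_class S R u. \<Union>w'\<in>word_class S R w. pres_rel S R `` {u' @ w'}) = word_class S R (u @ w)"
  proof (intro equalityI subsetI)
    fix x assume "x \<in> (\<Union>u'\<in>word_class S R u. \<Union>w'\<in>word_class S R w. pres_rel S R `` {u' @ w'})"
    then obtain u' w' where "pres_eq S R u u'" "pres_eq S R w w'" "x \<in> word_class S R (u' @ w')"
      by (auto simp: word_class_def mem_word_class_iff[symmetric])
    then show "x \<in> word_class S R (u @ w)"
      using word_class_eqI[OF pe_app] by metis
  next
    fix x assume "x \<in> word_class S R (u @ w)"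
    then show "x \<in> (\<Union>u'\<in>word_class S R u. \<Union>w'\<in>word_class S R w. pres_rel S R `` {u' @ w'})"
      using mem_word_class[OF assms(1)] mem_word_class[OF assms(2)] unfolding word_class_def by blast
  qed
  then show ?thesis
    by (simp add: presented_group_def word_class_def)
qed

definition word_inv :: "'g word \<Rightarrow> 'g word" where
  "word_inv w = rev (map (\<lambda>(g, b). (g, \<not> b)) w)"

lemma word_inv_words_over: "w \<in> words_over S \<Longrightarrow> word_inv w \<in> words_over S"
  by (auto simp: word_inv_def words_over_def)

lemma pres_eq_word_inv_append: "w \<in> words_over S \<Longrightarrow> pres_eq S R (word_inv w @ w) []"
proof (induction w)
  case Nil
  then show ?case by (simp add: word_inv_def pe_refl)
next
  case (Cons l w)
  obtain g b where l: "l = (g, b)" by force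
  have g: "g \<in> S" and w: "w \<in> words_over S" using Cons.prems l by auto
  have "word_inv (l # w) @ l # w = word_inv w @ ([(g, \<not> b), (g, \<not> \<not> b)] @ w)"
    by (simp add: word_inv_def l)
  moreover have "pres_eq S R (word_inv w @ ([(g, \<not> b), (g, \<not> \<not> b)] @ w)) (word_inv w @ ([] @ w))"
    by (intro pe_app pe_refl pe_cancel word_inv_words_over w g)
  ultimately show ?case
    using Cons.IH[OF w] by (metis append_Nil pe_trans)
qed

lemma group_presented_group: "group (presented_group S R)"
proof (rule groupI)
  let ?G = "presented_group S R"
  show "\<one>\<^bsub>?G\<^esub> \<in> carrier ?G"
    by (simp add: one_presented_group word_class_in_carrier)
  fix x y z assume "x \<in> carrier ?G" "y \<in> carrier ?G" "z \<in> carrier ?G"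
  then obtain a b c where abc: "a \<in> words_over S" "b \<in> words_over S" "c \<in> words_over S"
    and xyz: "x = word_class S R a" "y = word_class S R b" "z = word_class S R c"
    by (metis carrier_presented_groupE)
  show "x \<otimes>\<^bsub>?G\<^esub> y \<in> carrier ?G"
    using abc xyz by (simp add: mult_word_class word_class_in_carrier)
  show "x \<otimes>\<^bsub>?G\<^esub> y \<otimes>\<^bsub>?G\<^esub> z = x \<otimes>\<^bsub>?G\<^esub> (y \<otimes>\<^bsub>?G\<^esub> z)"
    using abc xyz by (simp add: mult_word_class)
  show "\<one>\<^bsub>?G\<^esub> \<otimes>\<^bsub>?G\<^esub> x = x"
    using abc xyz by (simp add: mult_word_class one_presented_group)
  show "\<exists>y\<in>carrier ?G. y \<otimes>\<^bsub>?G\<^esub> x = \<one>\<^bsub>?G\<^esub>"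
    using abc xyz word_inv_words_over[OF abc(1)] pres_eq_word_inv_append[OF abc(1)]
    by (intro bexI[of _ "word_class S R (word_inv a)"])
       (simp_all add: mult_word_class one_presented_group word_class_eqI word_class_in_carrier)
qed

lemma word_class_inv_letter:
  assumes "g \<in> S"
  shows "word_class S R [(g, True)] = inv\<^bsub>presented_group S R\<^esub> word_class S R [(g, False)]"
proof -
  interpret group "presented_group S R" by (rule group_presented_group)
  have "word_class S R [(g, True)] \<otimes>\<^bsub>presented_group S R\<^esub> word_class S R [(g, False)]
        = \<one>\<^bsub>presented_group S R\<^esub>"
    using assms pe_cancel[OF assms, of R True]
    by (simp add: mult_word_class one_presented_group word_class_eqI)
  then show ?thesis
    using assms by (simp add: inv_equality word_class_in_carrier)
qed

lemma presented_group_additive_eq_zero: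
  fixes h :: "'g word set \<Rightarrow> 'b::ab_group_add"
  assumes additive: "\<And>x y. x \<in> carrier (presented_group S R) \<Longrightarrow> y \<in> carrier (presented_group S R) \<Longrightarrow>
      h (x \<otimes>\<^bsub>presented_group S R\<^esub> y) = h x + h y"
    and gens: "\<And>g. g \<in> S \<Longrightarrow> h (word_class S R [(g, False)]) = 0"
    and x: "x \<in> carrier (presented_group S R)"
  shows "h x = 0"
proof -
  interpret group "presented_group S R" by (rule group_presented_group)
  have one: "h \<one>\<^bsub>presented_group S R\<^esub> = 0"
    using additive[of "\<one>\<^bsub>presented_group S R\<^esub>" "\<one>\<^bsub>presented_group S R\<^esub>"] by simp
  have letter: "h (word_class S R [l]) = 0" if l_gen: "fst l \<in> S" for l
  proof -
    obtain g b where l: "l = (g, b)" and g: "g \<in> S" using l_gen by (cases l) auto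
    have c: "word_class S R [(g, False)] \<in> carrier (presented_group S R)"
      using g by (simp add: word_class_in_carrier)
    show ?thesis
      using additive[OF inv_closed[OF c] c] gens[OF g] one c
      by (cases b) (simp_all add: l word_class_inv_letter[OF g])
  qed
  have "h (word_class S R w) = 0" if "w \<in> words_over S" for w
    using that
  proof (induction w)
    case Nil
    then show ?case using one by (simp add: one_presented_group)
  next
    case (Cons l w)
    then have "word_class S R (l # w) = word_class S R [l] \<otimes>\<^bsub>presented_group S R\<^esub> word_class S R w"
      by (simp add: mult_word_class)
    then show ?case
      using Cons letter additive by (simp add: word_class_in_carrier)
  qed
  then show ?thesis
    using x by (metis carrier_presented_groupE)
qed

definition eval_word :: "('b, 'c) monoid_scheme \<Rightarrow> ('g \<Rightarrow> 'b) \<Rightarrow> 'g word \<Rightarrow> 'b" where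
  "eval_word H f w = foldr (\<lambda>(g, b) acc. (if b then inv\<^bsub>H\<^esub> f g else f g) \<otimes>\<^bsub>H\<^esub> acc) w \<one>\<^bsub>H\<^esub>"

lemma eval_word_Nil [simp]: "eval_word H f [] = \<one>\<^bsub>H\<^esub>"
  and eval_word_Cons [simp]:
    "eval_word H f ((g, b) # w) = (if b then inv\<^bsub>H\<^esub> f g else f g) \<otimes>\<^bsub>H\<^esub> eval_word H f w"
  by (simp_all add: eval_word_def)

context
  fixes H :: "('b, 'c) monoid_scheme" and f :: "'g \<Rightarrow> 'b" and S :: "'g set"
  assumes H: "group H" and f: "f ` S \<subseteq> carrier H"
begin

interpretation H: group H by (rule H)

lemma eval_word_closed: "w \<in> words_over S \<Longrightarrow> eval_word H f w \<in> carrier H"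
  using f by (induction w) auto

lemma eval_word_append:
  "u \<in> words_over S \<Longrightarrow> w \<in> words_over S \<Longrightarrow> eval_word H f (u @ w) = eval_word H f u \<otimes>\<^bsub>H\<^esub> eval_word H f w"
proof (induction u)
  case Nil
  then show ?case by (simp add: eval_word_closed)
next
  case (Cons l u)
  then show ?case
    using f by (cases l) (auto simp: H.m_assoc eval_word_closed)
qed

lemma eval_word_pres_eq:
  assumes rels: "\<And>u w. (u, w) \<in> R \<Longrightarrow> u \<in> words_over S \<Longrightarrow> w \<in> words_over S \<Longrightarrow> eval_word H f u = eval_word H f w"
  shows "pres_eq S R u w \<Longrightarrow> eval_word H f u = eval_word H f w"
proof (induction rule: pres_eq.induct)
  case (pe_app a b c d)
  then show ?case using eval_word_append pres_eq_words_over by metis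
next
  case (pe_cancel g e)
  then show ?case using f by auto
qed (simp_all add: rels)

end

definition lift_pres :: "'g set \<Rightarrow> ('g word \<times> 'g word) set \<Rightarrow> ('b, 'c) monoid_scheme \<Rightarrow> ('g \<Rightarrow> 'b) \<Rightarrow> 'g word set \<Rightarrow> 'b" where
  "lift_pres S R H f C = eval_word H f (SOME w. w \<in> C)"

context
  fixes H :: "('b, 'c) monoid_scheme" and f :: "'g \<Rightarrow> 'b" and S :: "'g set" and R
  assumes H: "group H" and f: "f ` S \<subseteq> carrier H"
    and rels: "\<And>u w. (u, w) \<in> R \<Longrightarrow> u \<in> words_over S \<Longrightarrow> w \<in> words_over S \<Longrightarrow> eval_word H f u = eval_word H f w"
begin

lemma lift_pres_word_class:
  assumes "w \<in> words_over S"
  shows "lift_pres S R H f (word_class S R w) = eval_word H f w"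
proof -
  have "pres_eq S R w (SOME u. u \<in> word_class S R w)"
    using someI[of "\<lambda>u. u \<in> word_class S R w", OF mem_word_class[OF assms]]
    by (simp add: mem_word_class_iff)
  then show ?thesis
    unfolding lift_pres_def using eval_word_pres_eq[OF H f rels] by metis
qed

lemma lift_pres_hom: "lift_pres S R H f \<in> hom (presented_group S R) H"
proof (rule homI)
  fix x assume "x \<in> carrier (presented_group S R)"
  then show "lift_pres S R H f x \<in> carrier H"
    by (metis carrier_presented_groupE lift_pres_word_class eval_word_closed[OF H f])
next
  fix x y assume "x \<in> carrier (presented_group S R)" "y \<in> carrier (presented_group S R)"
  then show "lift_pres S R H f (x \<otimes>\<^bsub>presented_group S R\<^esub> y) = lift_pres S R H f x \<otimes>\<^bsub>H\<^esub> lift_pres S R H f y"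
    by (elim carrier_presented_groupE)
       (simp add: mult_word_class lift_pres_word_class eval_word_append[OF H f])
qed

end

section \<open>The groups G_Gamma\<close>

definition commutator :: "('a, 'b) monoid_scheme \<Rightarrow> 'a \<Rightarrow> 'a \<Rightarrow> 'a" where
  "commutator G a b = inv\<^bsub>G\<^esub> a \<otimes>\<^bsub>G\<^esub> inv\<^bsub>G\<^esub> b \<otimes>\<^bsub>G\<^esub> a \<otimes>\<^bsub>G\<^esub> b"

lemma (in group_hom) hom_commutator:
  "a \<in> carrier G \<Longrightarrow> b \<in> carrier G \<Longrightarrow> h (commutator G a b) = commutator H (h a) (h b)"
  by (simp add: commutator_def)

lemma (in group) additive_commutator:
  fixes h :: "'a \<Rightarrow> 'c::ab_group_add"
  assumes additive: "\<And>x y. x \<in> carrier G \<Longrightarrow> y \<in> carrier G \<Longrightarrow> h (x \<otimes> y) = h x + h y"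
    and "a \<in> carrier G" "b \<in> carrier G"
  shows "h (commutator G a b) = 0"
proof -
  have h_inv: "h (inv x) = - h x" if "x \<in> carrier G" for x
    using additive[OF inv_closed[OF that] that] additive[OF one_closed one_closed] that
    by (simp add: eq_neg_iff_add_eq_0)
  show ?thesis
    using assms by (simp add: commutator_def additive h_inv)
qed

lemma eval_word_comm_word:
  assumes "group H" "f a \<in> carrier H" "f b \<in> carrier H"
  shows "eval_word H f (comm_word a b) = commutator H (f a) (f b)"
proof -
  interpret group H by fact
  show ?thesis using assms(2,3) by (simp add: comm_word_def commutator_def m_assoc)
qed

lemma X_in_gamma_gens [simp]: "X l \<in> gamma_gens n E \<longleftrightarrow> l \<in> {1..n}"
  and Y_in_gamma_gens [simp]: "Y i j \<in> gamma_gens n E \<longleftrightarrow> nonedge n E i j"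
  by (auto simp: gamma_gens_def)

lemma nonedge_range: "nonedge n E i j \<Longrightarrow> i \<in> {1..n} \<and> j \<in> {1..n} \<and> i < j"
  by (simp add: nonedge_def)

lemma group_G_Gamma: "group (G_Gamma n E)"
  unfolding G_Gamma_def by (rule group_presented_group)

definition x_gen :: "nat \<Rightarrow> nat set set \<Rightarrow> nat \<Rightarrow> gen word set" where
  "x_gen n E l = word_class (gamma_gens n E) (gamma_rels n E) [(X l, False)]"

definition y_gen :: "nat \<Rightarrow> nat set set \<Rightarrow> nat \<Rightarrow> nat \<Rightarrow> gen word set" where
  "y_gen n E i j = word_class (gamma_gens n E) (gamma_rels n E) [(Y i j, False)]"

lemma x_gen_carrier: "l \<in> {1..n} \<Longrightarrow> x_gen n E l \<in> carrier (G_Gamma n E)"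
  by (simp add: x_gen_def G_Gamma_def word_class_in_carrier)

lemma y_gen_carrier: "nonedge n E i j \<Longrightarrow> y_gen n E i j \<in> carrier (G_Gamma n E)"
  by (simp add: y_gen_def G_Gamma_def word_class_in_carrier)

lemma word_class_comm_word:
  assumes "a \<in> gamma_gens n E" "b \<in> gamma_gens n E"
  shows "word_class (gamma_gens n E) (gamma_rels n E) (comm_word a b) =
    commutator (G_Gamma n E) (word_class (gamma_gens n E) (gamma_rels n E) [(a, False)])
      (word_class (gamma_gens n E) (gamma_rels n E) [(b, False)])"
  using assms
  by (simp add: G_Gamma_def comm_word_def commutator_def word_class_inv_letter[symmetric] mult_word_class)

lemma commutator_x_gen_edge:
  assumes "i \<in> {1..n}" "j \<in> {1..n}" "i < j" "{i, j} \<in> E"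
  shows "commutator (G_Gamma n E) (x_gen n E j) (x_gen n E i) = \<one>\<^bsub>G_Gamma n E\<^esub>"
proof -
  have "(comm_word (X j) (X i), []) \<in> gamma_rels n E"
    using assms unfolding gamma_rels_def by blast
  then have "pres_eq (gamma_gens n E) (gamma_rels n E) (comm_word (X j) (X i)) []"
    using assms by (intro pe_rel) (auto simp: comm_word_def)
  then show ?thesis
    using word_class_comm_word[of "X j" n E "X i"] assms
    by (simp add: x_gen_def word_class_eqI G_Gamma_def one_presented_group)
qed

lemma commutator_x_gen_nonedge:
  assumes "nonedge n E i j"
  shows "commutator (G_Gamma n E) (x_gen n E j) (x_gen n E i) = y_gen n E i j"
proof -
  have "(comm_word (X j) (X i), [(Y i j, False)]) \<in> gamma_rels n E"
    using assms unfolding gamma_rels_def by blast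
  then have "pres_eq (gamma_gens n E) (gamma_rels n E) (comm_word (X j) (X i)) [(Y i j, False)]"
    using assms nonedge_range[OF assms] by (intro pe_rel) (auto simp: comm_word_def)
  then show ?thesis
    using word_class_comm_word[of "X j" n E "X i"] assms nonedge_range[OF assms]
    by (simp add: x_gen_def y_gen_def word_class_eqI G_Gamma_def)
qed

lemma G_Gamma_additive_eq_zero:
  fixes h :: "gen word set \<Rightarrow> 'b::ab_group_add"
  assumes additive: "\<And>x y. x \<in> carrier (G_Gamma n E) \<Longrightarrow> y \<in> carrier (G_Gamma n E) \<Longrightarrow>
      h (x \<otimes>\<^bsub>G_Gamma n E\<^esub> y) = h x + h y"
    and x_gens: "\<And>l. l \<in> {1..n} \<Longrightarrow> h (x_gen n E l) = 0"
    and "x \<in> carrier (G_Gamma n E)"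
  shows "h x = 0"
proof (rule presented_group_additive_eq_zero[where S = "gamma_gens n E" and R = "gamma_rels n E"])
  fix g assume "g \<in> gamma_gens n E"
  then show "h (word_class (gamma_gens n E) (gamma_rels n E) [(g, False)]) = 0"
  proof (cases g)
    case (X l)
    then show ?thesis using \<open>g \<in> gamma_gens n E\<close> x_gens by (simp add: x_gen_def)
  next
    case (Y i j)
    then have "nonedge n E i j" using \<open>g \<in> gamma_gens n E\<close> by simp
    then show ?thesis
      using group.additive_commutator[OF group_G_Gamma additive] commutator_x_gen_nonedge
        x_gen_carrier nonedge_range Y
      by (metis y_gen_def)
  qed
qed (use assms in \<open>simp_all add: G_Gamma_def\<close>)

text \<open>Commutators in the model are \<open>(0, c(a, b) - c(b, a))\<close>, \<open>c\<close> the bilinear cocycle below,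
  so \<open>x\<^sub>l \<mapsto> (e\<^sub>l, 0)\<close>, \<open>y\<^sub>i\<^sub>j \<mapsto> (0, e\<^sub>i\<^sub>j)\<close> respects the relations of \<open>G_Gamma\<close>.\<close>

definition cocycle :: "nat \<Rightarrow> nat set set \<Rightarrow> (nat \<Rightarrow> int) \<Rightarrow> (nat \<Rightarrow> int) \<Rightarrow> nat \<times> nat \<Rightarrow> int" where
  "cocycle n E a b = (\<lambda>(p, q). if nonedge n E p q then a q * b p else 0)"

lemma cocycle_add_left: "cocycle n E (a + b) c = cocycle n E a c + cocycle n E b c"
  and cocycle_add_right: "cocycle n E c (a + b) = cocycle n E c a + cocycle n E c b"
  and cocycle_minus_left: "cocycle n E (- a) c = - cocycle n E a c"
  and cocycle_minus_right: "cocycle n E c (- a) = - cocycle n E c a"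
  and cocycle_diff_left: "cocycle n E (a - b) c = cocycle n E a c - cocycle n E b c"
  and cocycle_diff_right: "cocycle n E c (a - b) = cocycle n E c a - cocycle n E c b"
  and cocycle_zero_left [simp]: "cocycle n E 0 c = 0"
  and cocycle_zero_right [simp]: "cocycle n E c 0 = 0"
  by (auto simp: cocycle_def fun_eq_iff algebra_simps)

lemmas cocycle_bilinear = cocycle_add_left cocycle_add_right cocycle_minus_left
  cocycle_minus_right cocycle_diff_left cocycle_diff_right

type_synonym model_elem = "(nat \<Rightarrow> int) \<times> (nat \<times> nat \<Rightarrow> int)"

definition model :: "nat \<Rightarrow> nat set set \<Rightarrow> model_elem monoid" where
  "model n E = \<lparr>carrier = UNIV,
     Group.monoid.mult = (\<lambda>x y. (fst x + fst y, snd x + snd y + cocycle n E (fst x) (fst y))),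
     Group.monoid.one = (0, 0)\<rparr>"

lemma model_carrier [simp]: "carrier (model n E) = UNIV"
  and model_mult [simp]: "x \<otimes>\<^bsub>model n E\<^esub> y = (fst x + fst y, snd x + snd y + cocycle n E (fst x) (fst y))"
  and model_one [simp]: "\<one>\<^bsub>model n E\<^esub> = (0, 0)"
  by (simp_all add: model_def)

lemma group_model: "group (model n E)"
proof (rule groupI)
  fix x y z :: model_elem
  show "x \<otimes>\<^bsub>model n E\<^esub> y \<otimes>\<^bsub>model n E\<^esub> z = x \<otimes>\<^bsub>model n E\<^esub> (y \<otimes>\<^bsub>model n E\<^esub> z)"
    by (simp add: cocycle_bilinear algebra_simps)
  show "\<exists>y\<in>carrier (model n E). y \<otimes>\<^bsub>model n E\<^esub> x = \<one>\<^bsub>model n E\<^esub>"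
    by (rule bexI[of _ "(- fst x, - snd x + cocycle n E (fst x) (fst x))"]) (auto simp: cocycle_bilinear)
qed simp_all

lemma model_inv [simp]: "inv\<^bsub>model n E\<^esub> x = (- fst x, - snd x + cocycle n E (fst x) (fst x))"
  by (rule group.inv_equality[OF group_model]) (auto simp: cocycle_bilinear)

definition comm_form :: "nat \<Rightarrow> nat set set \<Rightarrow> (nat \<Rightarrow> int) \<Rightarrow> (nat \<Rightarrow> int) \<Rightarrow> nat \<times> nat \<Rightarrow> int" where
  "comm_form n E a b = cocycle n E a b - cocycle n E b a"

lemma comm_form_apply:
  "comm_form n E a b (p, q) = (if nonedge n E p q then a q * b p - b q * a p else 0)"
  by (simp add: comm_form_def cocycle_def)

lemma comm_form_antisym: "comm_form n E a b = - comm_form n E b a"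
  by (simp add: comm_form_def)

lemma commutator_model: "commutator (model n E) x y = (0, comm_form n E (fst x) (fst y))"
  by (simp add: commutator_def comm_form_def cocycle_bilinear algebra_simps)

definition unit_fun :: "'a \<Rightarrow> 'a \<Rightarrow> int" where
  "unit_fun a = (\<lambda>b. if b = a then 1 else 0)"

lemma sum_unit_fun_mult:
  "finite A \<Longrightarrow> (\<Sum>k\<in>A. unit_fun l k * f k) = (if l \<in> A then f l else 0)"
  by (simp add: unit_fun_def if_distrib[of "\<lambda>x. x * _"] sum.delta' cong: if_cong)

lemma sum_mult_unit_fun:
  "finite A \<Longrightarrow> (\<Sum>k\<in>A. f k * unit_fun l k) = (if l \<in> A then f l else 0)"
  using sum_unit_fun_mult[of A l f] by (simp add: mult.commute)

fun model_gen :: "gen \<Rightarrow> model_elem" where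
  "model_gen (X l) = (unit_fun l, 0)"
| "model_gen (Y i j) = (0, unit_fun (i, j))"

lemma model_gen_respects_gamma_rels:
  assumes "(u, w) \<in> gamma_rels n E"
  shows "eval_word (model n E) model_gen u = eval_word (model n E) model_gen w"
  using assms unfolding gamma_rels_def
proof (elim UnE CollectE exE conjE)
  fix i j assume "(u, w) = (comm_word (X j) (X i), [])" "i < j" "{i, j} \<in> E"
  then show ?thesis
    by (auto simp: eval_word_comm_word[OF group_model] commutator_model comm_form_apply
        unit_fun_def fun_eq_iff nonedge_def insert_commute)
next
  fix i j assume "(u, w) = (comm_word (X j) (X i), [(Y i j, False)])" "nonedge n E i j"
  then show ?thesis
    by (auto simp: eval_word_comm_word[OF group_model] commutator_model comm_form_apply
        unit_fun_def fun_eq_iff nonedge_def)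
next
  fix l i j assume "(u, w) = (comm_word (X l) (Y i j), [])"
  then show ?thesis
    by (simp add: eval_word_comm_word[OF group_model] commutator_model comm_form_def)
qed

definition model_hom :: "nat \<Rightarrow> nat set set \<Rightarrow> gen word set \<Rightarrow> model_elem" where
  "model_hom n E = lift_pres (gamma_gens n E) (gamma_rels n E) (model n E) model_gen"

lemma model_hom_word_class:
  "w \<in> words_over (gamma_gens n E) \<Longrightarrow>
    model_hom n E (word_class (gamma_gens n E) (gamma_rels n E) w) = eval_word (model n E) model_gen w"
  unfolding model_hom_def
  by (rule lift_pres_word_class[OF group_model]) (auto simp: model_gen_respects_gamma_rels)

lemma group_hom_model_hom: "group_hom (G_Gamma n E) (model n E) (model_hom n E)"
proof -
  have "model_hom n E \<in> hom (G_Gamma n E) (model n E)"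
    unfolding model_hom_def G_Gamma_def
    by (rule lift_pres_hom[OF group_model]) (auto simp: model_gen_respects_gamma_rels)
  then show ?thesis
    by (simp add: group_hom_def group_hom_axioms_def group_G_Gamma group_model)
qed

definition abel :: "nat \<Rightarrow> nat set set \<Rightarrow> gen word set \<Rightarrow> nat \<Rightarrow> int" where
  "abel n E g = fst (model_hom n E g)"

definition central :: "nat \<Rightarrow> nat set set \<Rightarrow> gen word set \<Rightarrow> nat \<times> nat \<Rightarrow> int" where
  "central n E g = snd (model_hom n E g)"

context
  fixes n :: nat and E :: "nat set set"
begin

interpretation G: group "G_Gamma n E" by (rule group_G_Gamma)
interpretation model_hom: group_hom "G_Gamma n E" "model n E" "model_hom n E"
  by (rule group_hom_model_hom)

lemma abel_mult:
  "x \<in> carrier (G_Gamma n E) \<Longrightarrow> y \<in> carrier (G_Gamma n E) \<Longrightarrow>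
    abel n E (x \<otimes>\<^bsub>G_Gamma n E\<^esub> y) = abel n E x + abel n E y"
  by (simp add: abel_def)

lemma central_mult:
  "x \<in> carrier (G_Gamma n E) \<Longrightarrow> y \<in> carrier (G_Gamma n E) \<Longrightarrow>
    central n E (x \<otimes>\<^bsub>G_Gamma n E\<^esub> y) = central n E x + central n E y + cocycle n E (abel n E x) (abel n E y)"
  by (simp add: abel_def central_def)

lemma abel_inv: "x \<in> carrier (G_Gamma n E) \<Longrightarrow> abel n E (inv\<^bsub>G_Gamma n E\<^esub> x) = - abel n E x"
  by (simp add: abel_def)

lemma central_inv:
  "x \<in> carrier (G_Gamma n E) \<Longrightarrow>
    central n E (inv\<^bsub>G_Gamma n E\<^esub> x) = - central n E x + cocycle n E (abel n E x) (abel n E x)"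
  by (simp add: abel_def central_def)

lemma model_hom_one [simp]: "model_hom n E \<one>\<^bsub>G_Gamma n E\<^esub> = (0, 0)"
  by simp

lemma abel_one [simp]: "abel n E \<one>\<^bsub>G_Gamma n E\<^esub> = 0"
  and central_one [simp]: "central n E \<one>\<^bsub>G_Gamma n E\<^esub> = 0"
  by (simp_all add: abel_def central_def)

lemma abel_pow:
  "x \<in> carrier (G_Gamma n E) \<Longrightarrow> abel n E (x [^]\<^bsub>G_Gamma n E\<^esub> (m::nat)) = (\<lambda>i. int m * abel n E x i)"
  by (induction m) (simp_all add: abel_mult fun_eq_iff algebra_simps)

lemma central_pow:
  assumes "x \<in> carrier (G_Gamma n E)" "abel n E x = 0"
  shows "central n E (x [^]\<^bsub>G_Gamma n E\<^esub> (m::nat)) = (\<lambda>q. int m * central n E x q)"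
proof (induction m)
  case (Suc m)
  have "abel n E (x [^]\<^bsub>G_Gamma n E\<^esub> m) = 0"
    using assms by (simp add: abel_pow fun_eq_iff)
  then show ?case
    using Suc assms by (simp add: central_mult algebra_simps)
qed (simp add: fun_eq_iff)

lemma model_hom_commutator:
  "x \<in> carrier (G_Gamma n E) \<Longrightarrow> y \<in> carrier (G_Gamma n E) \<Longrightarrow>
    model_hom n E (commutator (G_Gamma n E) x y) = (0, comm_form n E (abel n E x) (abel n E y))"
  by (simp add: model_hom.hom_commutator commutator_model abel_def)

lemma model_hom_x_gen: "l \<in> {1..n} \<Longrightarrow> model_hom n E (x_gen n E l) = (unit_fun l, 0)"
  by (simp add: x_gen_def model_hom_word_class)

lemma model_hom_y_gen: "nonedge n E i j \<Longrightarrow> model_hom n E (y_gen n E i j) = (0, unit_fun (i, j))"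
  by (simp add: y_gen_def model_hom_word_class)

lemma abel_x_gen: "l \<in> {1..n} \<Longrightarrow> abel n E (x_gen n E l) = unit_fun l"
  by (simp add: abel_def model_hom_x_gen)

lemma abel_y_gen: "nonedge n E i j \<Longrightarrow> abel n E (y_gen n E i j) = 0"
  and central_y_gen: "nonedge n E i j \<Longrightarrow> central n E (y_gen n E i j) = unit_fun (i, j)"
  by (simp_all add: abel_def central_def model_hom_y_gen)

lemma additive_eq_sum_abel:
  fixes h :: "gen word set \<Rightarrow> int"
  assumes additive: "\<And>x y. x \<in> carrier (G_Gamma n E) \<Longrightarrow> y \<in> carrier (G_Gamma n E) \<Longrightarrow>
      h (x \<otimes>\<^bsub>G_Gamma n E\<^esub> y) = h x + h y"
    and g: "g \<in> carrier (G_Gamma n E)"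
  shows "h g = (\<Sum>l\<in>{1..n}. abel n E g l * h (x_gen n E l))"
proof -
  have "h g - (\<Sum>l\<in>{1..n}. abel n E g l * h (x_gen n E l)) = 0"
  proof (rule G_Gamma_additive_eq_zero[OF _ _ g])
    fix x y assume "x \<in> carrier (G_Gamma n E)" "y \<in> carrier (G_Gamma n E)"
    then show "h (x \<otimes>\<^bsub>G_Gamma n E\<^esub> y) - (\<Sum>l\<in>{1..n}. abel n E (x \<otimes>\<^bsub>G_Gamma n E\<^esub> y) l * h (x_gen n E l))
      = (h x - (\<Sum>l\<in>{1..n}. abel n E x l * h (x_gen n E l)))
        + (h y - (\<Sum>l\<in>{1..n}. abel n E y l * h (x_gen n E l)))"
      by (simp add: additive abel_mult distrib_right sum.distrib)
  next
    fix k assume "k \<in> {1..n}"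
    then show "h (x_gen n E k) - (\<Sum>l\<in>{1..n}. abel n E (x_gen n E k) l * h (x_gen n E l)) = 0"
      by (simp add: abel_x_gen sum_unit_fun_mult del: atLeastAtMost_iff)
  qed
  then show ?thesis by simp
qed

lemma abel_outside:
  assumes "g \<in> carrier (G_Gamma n E)" "i \<notin> {1..n}"
  shows "abel n E g i = 0"
proof -
  have "abel n E g i = (\<Sum>l\<in>{1..n}. abel n E g l * abel n E (x_gen n E l) i)"
    using additive_eq_sum_abel[of "\<lambda>g. abel n E g i"] assms(1) by (simp add: abel_mult)
  also have "\<dots> = 0"
    using assms(2) by (intro sum.neutral) (auto simp: abel_x_gen unit_fun_def)
  finally show ?thesis .
qed

end

section \<open>Linear algebra over the integers\<close>

lemma transpose_mat_kernel:
  fixes B :: "int mat"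
  assumes "B \<in> carrier_mat N N" "v \<in> carrier_vec N" "v \<noteq> 0\<^sub>v N" "B *\<^sub>v v = 0\<^sub>v N"
  obtains y where "y \<in> carrier_vec N" "y \<noteq> 0\<^sub>v N" "transpose_mat B *\<^sub>v y = 0\<^sub>v N"
proof -
  have "det (transpose_mat B) = 0"
    using assms det_0_iff_vec_prod_zero det_transpose by metis
  then show ?thesis
    using that det_0_iff_vec_prod_zero[of "transpose_mat B" N] assms(1) by auto
qed

text \<open>Both conditions say \<open>det (A - 1) = 0\<close>.\<close>

lemma fixed_row_of_fixed_column_lessThan:
  fixes A :: "nat \<Rightarrow> nat \<Rightarrow> int"
  assumes x: "i0 < N" "x i0 \<noteq> 0" and fixed: "\<And>i. i < N \<Longrightarrow> (\<Sum>j<N. A i j * x j) = x i"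
  obtains u where "\<exists>j<N. u j \<noteq> 0" "\<And>j. j < N \<Longrightarrow> (\<Sum>i<N. u i * A i j) = u j"
proof -
  define B :: "int mat" where "B = mat N N (\<lambda>(i, j). A i j - (if i = j then 1 else 0))"
  define v where "v = vec N x"
  have Bv: "B *\<^sub>v v = 0\<^sub>v N"
  proof (rule eq_vecI)
    fix i assume "i < dim_vec (0\<^sub>v N :: int vec)"
    then have i: "i < N" by simp
    have "(B *\<^sub>v v) $ i = (\<Sum>j<N. A i j * x j) - x i"
      using i by (simp add: B_def v_def scalar_prod_def left_diff_distrib sum_subtractf
          if_distrib[of "\<lambda>z. z * _"] sum.delta atLeast0LessThan)
    then show "(B *\<^sub>v v) $ i = 0\<^sub>v N $ i"
      using fixed[OF i] i by simp
  qed (simp add: B_def)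
  have v0: "v \<noteq> 0\<^sub>v N"
    using x by (auto simp: v_def dest!: arg_cong[where f = "\<lambda>w. w $ i0"])
  obtain y where y: "y \<in> carrier_vec N" "y \<noteq> 0\<^sub>v N" "transpose_mat B *\<^sub>v y = 0\<^sub>v N"
    by (rule transpose_mat_kernel[of B N v, OF _ _ v0 Bv]) (auto simp: B_def v_def)
  show ?thesis
  proof (rule that[of "\<lambda>i. y $ i"])
    show "\<exists>j<N. y $ j \<noteq> 0"
      using y(1,2) by (metis carrier_vecD eq_vecI index_zero_vec(1,2))
  next
    fix j assume j: "j < N"
    have "0 = (transpose_mat B *\<^sub>v y) $ j"
      using y(3) j by simp
    also have "\<dots> = (\<Sum>i<N. y $ i * A i j) - y $ j"
      using j y(1) by (simp add: B_def scalar_prod_def mult.commute right_diff_distrib sum_subtractf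
          if_distrib[of "\<lambda>z. _ * z"] sum.delta atLeast0LessThan)
    finally show "(\<Sum>i<N. y $ i * A i j) = y $ j"
      by simp
  qed
qed

lemma fixed_row_of_fixed_column:
  fixes A :: "'i \<Rightarrow> 'i \<Rightarrow> int"
  assumes I: "finite I" and x: "i0 \<in> I" "x i0 \<noteq> 0"
    and fixed: "\<And>i. i \<in> I \<Longrightarrow> (\<Sum>j\<in>I. A i j * x j) = x i"
  obtains u where "\<exists>j\<in>I. u j \<noteq> 0" "\<And>j. j \<in> I \<Longrightarrow> (\<Sum>i\<in>I. u i * A i j) = u j"
proof -
  obtain b where b: "bij_betw b {..<card I} I"
    using ex_bij_betw_nat_finite[OF I] by (auto simp: atLeast0LessThan)
  define c where "c = the_inv_into {..<card I} b"
  have c: "c i < card I" "b (c i) = i" if "i \<in> I" for i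
  proof -
    have "inj_on b {..<card I}" "i \<in> b ` {..<card I}"
      using b that by (auto simp: bij_betw_def)
    then show "c i < card I" "b (c i) = i"
      unfolding c_def using the_inv_into_into[of b "{..<card I}" i "{..<card I}"]
      by (auto simp: f_the_inv_into_f)
  qed
  have b_range: "b r \<in> I" and c_b: "c (b r) = r" if "r < card I" for r
    using b that unfolding c_def by (auto simp: bij_betw_def the_inv_into_f_f)
  have reindex: "(\<Sum>i\<in>I. h i) = (\<Sum>r<card I. h (b r))" for h :: "'i \<Rightarrow> int"
    using sum.reindex_bij_betw[OF b, of h] by simp
  obtain u where u: "\<exists>s<card I. u s \<noteq> 0"
    and u_fixed: "\<And>s. s < card I \<Longrightarrow> (\<Sum>r<card I. u r * A (b r) (b s)) = u s"
    by (rule fixed_row_of_fixed_column_lessThan[of "c i0" "card I" "\<lambda>r. x (b r)" "\<lambda>r s. A (b r) (b s)"])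
       (use x c b_range fixed reindex in auto)
  show ?thesis
  proof (rule that[of "\<lambda>i. u (c i)"])
    show "\<exists>j\<in>I. u (c j) \<noteq> 0"
      using u b_range c_b by metis
    fix j assume "j \<in> I"
    then show "(\<Sum>i\<in>I. u (c i) * A i j) = u (c j)"
      using u_fixed[of "c j"] c by (simp add: reindex c_b)
  qed
qed

lemma sum_fixed_column_form:
  fixes M :: "'i \<Rightarrow> 'i \<Rightarrow> int"
  assumes "\<And>k. k \<in> I \<Longrightarrow> (\<Sum>i\<in>I. M k i * u i) = u k"
  shows "(\<Sum>i\<in>I. u i * (\<Sum>k\<in>I. b k * M k i)) = (\<Sum>k\<in>I. u k * b k)"
proof -
  have "(\<Sum>i\<in>I. u i * (\<Sum>k\<in>I. b k * M k i)) = (\<Sum>i\<in>I. \<Sum>k\<in>I. b k * (M k i * u i))"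
    by (simp add: sum_distrib_left algebra_simps)
  also have "\<dots> = (\<Sum>k\<in>I. \<Sum>i\<in>I. b k * (M k i * u i))"
    by (rule sum.swap)
  also have "\<dots> = (\<Sum>k\<in>I. b k * (\<Sum>i\<in>I. M k i * u i))"
    by (simp add: sum_distrib_left)
  also have "\<dots> = (\<Sum>k\<in>I. u k * b k)"
    using assms by (simp add: mult.commute)
  finally show ?thesis .
qed

section \<open>The linear maps induced by an endomorphism\<close>

definition abel_matrix :: "nat \<Rightarrow> nat set set \<Rightarrow> (gen word set \<Rightarrow> gen word set) \<Rightarrow> nat \<Rightarrow> nat \<Rightarrow> int" where
  "abel_matrix n E \<phi> k = abel n E (\<phi> (x_gen n E k))"

definition abel_map :: "nat \<Rightarrow> nat set set \<Rightarrow> (gen word set \<Rightarrow> gen word set) \<Rightarrow> (nat \<Rightarrow> int) \<Rightarrow> nat \<Rightarrow> int" where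
  "abel_map n E \<phi> a = (\<lambda>i. \<Sum>k\<in>{1..n}. a k * abel_matrix n E \<phi> k i)"

lemma abel_map_add: "abel_map n E \<phi> (a + b) = abel_map n E \<phi> a + abel_map n E \<phi> b"
  by (simp add: abel_map_def fun_eq_iff algebra_simps sum.distrib)

lemma abel_map_zero [simp]: "abel_map n E \<phi> 0 = 0"
  by (simp add: abel_map_def fun_eq_iff)

lemma abel_map_smult: "abel_map n E \<phi> (\<lambda>i. c * a i) = (\<lambda>i. c * abel_map n E \<phi> a i)"
  by (simp add: abel_map_def sum_distrib_left mult.assoc)

lemma abel_map_unit_fun: "l \<in> {1..n} \<Longrightarrow> abel_map n E \<phi> (unit_fun l) = abel_matrix n E \<phi> l"
  by (simp add: abel_map_def fun_eq_iff sum_unit_fun_mult del: atLeastAtMost_iff)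

lemma abel_hom_apply:
  assumes \<phi>: "\<phi> \<in> hom (G_Gamma n E) (G_Gamma n E)" and g: "g \<in> carrier (G_Gamma n E)"
  shows "abel n E (\<phi> g) = abel_map n E \<phi> (abel n E g)"
proof
  fix i
  show "abel n E (\<phi> g) i = abel_map n E \<phi> (abel n E g) i"
    using additive_eq_sum_abel[where h = "\<lambda>g. abel n E (\<phi> g) i", OF _ g] \<phi>
    by (simp add: hom_mult hom_in_carrier abel_mult abel_map_def abel_matrix_def)
qed

lemma abel_map_abel_matrix_inverse:
  assumes \<phi>: "\<phi> \<in> hom (G_Gamma n E) (G_Gamma n E)" and \<psi>: "\<psi> \<in> hom (G_Gamma n E) (G_Gamma n E)"
    and inverse: "\<And>g. g \<in> carrier (G_Gamma n E) \<Longrightarrow> \<phi> (\<psi> g) = g" and l: "l \<in> {1..n}"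
  shows "abel_map n E \<phi> (abel_matrix n E \<psi> l) = unit_fun l"
  using abel_hom_apply[OF \<phi> hom_in_carrier[OF \<psi> x_gen_carrier[OF l]]] inverse[OF x_gen_carrier[OF l]]
  by (simp add: abel_matrix_def abel_x_gen[OF l])

definition nonedges :: "nat \<Rightarrow> nat set set \<Rightarrow> (nat \<times> nat) set" where
  "nonedges n E = {(i, j). nonedge n E i j}"

lemma finite_nonedges [simp]: "finite (nonedges n E)"
  by (rule finite_subset[of _ "{1..n} \<times> {1..n}"]) (auto simp: nonedges_def nonedge_def)

lemma sum_nonedges:
  "(\<Sum>p\<in>nonedges n E. h p) = (\<Sum>k\<in>{1..n}. \<Sum>l\<in>{1..n}. if nonedge n E k l then h (k, l) else 0)"
proof -
  have "nonedges n E = {p \<in> {1..n} \<times> {1..n}. nonedge n E (fst p) (snd p)}"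
    by (auto simp: nonedges_def nonedge_def)
  then have "(\<Sum>p\<in>nonedges n E. h p)
      = (\<Sum>(k, l)\<in>{1..n} \<times> {1..n}. if nonedge n E k l then h (k, l) else 0)"
    by (auto simp: sum.inter_filter intro!: sum.cong)
  then show ?thesis
    by (simp add: sum.cartesian_product)
qed

definition central_matrix :: "nat \<Rightarrow> nat set set \<Rightarrow> (gen word set \<Rightarrow> gen word set) \<Rightarrow> nat \<times> nat \<Rightarrow> nat \<times> nat \<Rightarrow> int" where
  "central_matrix n E \<phi> p = central n E (\<phi> (y_gen n E (fst p) (snd p)))"

definition central_map :: "nat \<Rightarrow> nat set set \<Rightarrow> (gen word set \<Rightarrow> gen word set) \<Rightarrow> (nat \<times> nat \<Rightarrow> int) \<Rightarrow> nat \<times> nat \<Rightarrow> int" where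
  "central_map n E \<phi> t = (\<lambda>q. \<Sum>p\<in>nonedges n E. t p * central_matrix n E \<phi> p q)"

lemma central_map_add: "central_map n E \<phi> (s + t) = central_map n E \<phi> s + central_map n E \<phi> t"
  and central_map_diff: "central_map n E \<phi> (s - t) = central_map n E \<phi> s - central_map n E \<phi> t"
  and central_map_zero [simp]: "central_map n E \<phi> 0 = 0"
  by (simp_all add: central_map_def fun_eq_iff sum.distrib sum_subtractf algebra_simps)

context
  fixes n E \<phi>
  assumes \<phi>: "\<phi> \<in> hom (G_Gamma n E) (G_Gamma n E)"
begin

interpretation G: group "G_Gamma n E" by (rule group_G_Gamma)
interpretation \<phi>: group_hom "G_Gamma n E" "G_Gamma n E" \<phi>
  using \<phi> by (simp add: group_hom_def group_hom_axioms_def group_G_Gamma)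

lemma model_hom_image_y_gen:
  assumes "nonedge n E i j"
  shows "model_hom n E (\<phi> (y_gen n E i j)) = (0, comm_form n E (abel_matrix n E \<phi> j) (abel_matrix n E \<phi> i))"
  using assms nonedge_range[OF assms]
  by (simp add: commutator_x_gen_nonedge[symmetric] \<phi>.hom_commutator x_gen_carrier
      model_hom_commutator abel_matrix_def)

lemma central_matrix_nonedge:
  "nonedge n E i j \<Longrightarrow> central_matrix n E \<phi> (i, j) = comm_form n E (abel_matrix n E \<phi> j) (abel_matrix n E \<phi> i)"
  by (simp add: central_matrix_def central_def model_hom_image_y_gen)

lemma comm_form_abel_matrix_edge:
  assumes "k \<in> {1..n}" "l \<in> {1..n}" "{k, l} \<in> E"
  shows "comm_form n E (abel_matrix n E \<phi> k) (abel_matrix n E \<phi> l) = 0"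
proof -
  have ordered: "comm_form n E (abel_matrix n E \<phi> j) (abel_matrix n E \<phi> i) = 0"
    if "i \<in> {1..n}" "j \<in> {1..n}" "i < j" "{i, j} \<in> E" for i j
    using model_hom_commutator[OF \<phi>.hom_closed \<phi>.hom_closed, OF x_gen_carrier x_gen_carrier, OF that(2,1)]
      commutator_x_gen_edge[OF that] that
    by (simp add: \<phi>.hom_commutator[symmetric] x_gen_carrier abel_matrix_def)
  show ?thesis
  proof (cases k l rule: linorder_cases)
    case less
    then show ?thesis
      using ordered[of k l] assms comm_form_antisym by (metis neg_equal_0_iff_equal)
  next
    case greater
    then show ?thesis
      using ordered[of l k] assms by (simp add: insert_commute)
  qed (simp add: comm_form_def)
qed


lemma comm_form_abel_matrix_ordered:
  assumes kl: "k \<in> {1..n}" "l \<in> {1..n}" "k < l"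
  shows "comm_form n E (abel_matrix n E \<phi> k) (abel_matrix n E \<phi> l) =
    (if nonedge n E k l then - central_matrix n E \<phi> (k, l) else 0)"
proof (cases "nonedge n E k l")
  case True
  then show ?thesis
    using comm_form_antisym[of n E "abel_matrix n E \<phi> k" "abel_matrix n E \<phi> l"]
    by (simp add: central_matrix_nonedge)
next
  case False
  then show ?thesis
    using kl comm_form_abel_matrix_edge[OF kl(1,2)] by (simp add: nonedge_def)
qed
end

lemma double_sum_eq_sum_pairs:
  fixes X :: "'i::linorder \<Rightarrow> 'i \<Rightarrow> 'a::comm_monoid_add"
  assumes "\<And>k. X k k = 0"
  shows "(\<Sum>k\<in>N. \<Sum>l\<in>N. X k l) = (\<Sum>k\<in>N. \<Sum>l\<in>N. if k < l then X k l + X l k else 0)"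
proof -
  have "(\<Sum>k\<in>N. \<Sum>l\<in>N. X k l)
      = (\<Sum>k\<in>N. \<Sum>l\<in>N. if k < l then X k l else 0) + (\<Sum>k\<in>N. \<Sum>l\<in>N. if l < k then X k l else 0)"
    using assms by (simp add: sum.distrib[symmetric]) (intro sum.cong refl, auto)
  also have "(\<Sum>k\<in>N. \<Sum>l\<in>N. if l < k then X k l else 0) = (\<Sum>k\<in>N. \<Sum>l\<in>N. if k < l then X l k else 0)"
    by (rule sum.swap)
  finally show ?thesis
    by (simp add: sum.distrib[symmetric] if_distrib cong: if_cong)
qed

lemma comm_form_abel_map_expand:
  "comm_form n E (abel_map n E \<phi> a) (abel_map n E \<phi> b) r =
    (\<Sum>k\<in>{1..n}. \<Sum>l\<in>{1..n}. a k * b l * comm_form n E (abel_matrix n E \<phi> k) (abel_matrix n E \<phi> l) r)"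
proof (cases r)
  case (Pair r1 r2)
  show ?thesis
  proof (cases "nonedge n E r1 r2")
    case True
    let ?M = "abel_matrix n E \<phi>"
    have "comm_form n E (abel_map n E \<phi> a) (abel_map n E \<phi> b) r
        = (\<Sum>k\<in>{1..n}. \<Sum>l\<in>{1..n}. (a k * ?M k r2) * (b l * ?M l r1))
          - (\<Sum>k\<in>{1..n}. \<Sum>l\<in>{1..n}. (a k * ?M k r1) * (b l * ?M l r2))"
      using True by (simp add: Pair comm_form_apply abel_map_def sum_product mult.commute)
    also have "\<dots> = (\<Sum>k\<in>{1..n}. \<Sum>l\<in>{1..n}. a k * b l * comm_form n E (?M k) (?M l) r)"
      using True by (simp add: Pair comm_form_apply sum_subtractf[symmetric] algebra_simps)
    finally show ?thesis .
  qed (simp add: Pair comm_form_apply)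
qed

context
  fixes n E \<phi>
  assumes \<phi>: "\<phi> \<in> hom (G_Gamma n E) (G_Gamma n E)"
begin

interpretation G: group "G_Gamma n E" by (rule group_G_Gamma)
interpretation \<phi>: group_hom "G_Gamma n E" "G_Gamma n E" \<phi>
  using \<phi> by (simp add: group_hom_def group_hom_axioms_def group_G_Gamma)

text \<open>The model version of \<open>\<phi> [x, y] = [\<phi> x, \<phi> y]\<close>.\<close>

lemma comm_form_abel_map:
  "comm_form n E (abel_map n E \<phi> a) (abel_map n E \<phi> b) = central_map n E \<phi> (comm_form n E a b)"
proof
  fix r
  define C where "C k l = comm_form n E (abel_matrix n E \<phi> k) (abel_matrix n E \<phi> l) r" for k l
  have "comm_form n E (abel_map n E \<phi> a) (abel_map n E \<phi> b) r
      = (\<Sum>k\<in>{1..n}. \<Sum>l\<in>{1..n}. a k * b l * C k l)"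
    by (simp add: comm_form_abel_map_expand C_def)
  also have "\<dots> = (\<Sum>k\<in>{1..n}. \<Sum>l\<in>{1..n}. if k < l then a k * b l * C k l + a l * b k * C l k else 0)"
    by (rule double_sum_eq_sum_pairs) (simp add: C_def comm_form_def)
  also have "\<dots> = (\<Sum>k\<in>{1..n}. \<Sum>l\<in>{1..n}.
      if nonedge n E k l then comm_form n E a b (k, l) * central_matrix n E \<phi> (k, l) r else 0)"
  proof (intro sum.cong refl)
    fix k l assume kl: "k \<in> {1..n}" "l \<in> {1..n}"
    have C_antisym: "C l k = - C k l"
      unfolding C_def by (subst comm_form_antisym) simp
    show "(if k < l then a k * b l * C k l + a l * b k * C l k else 0) =
      (if nonedge n E k l then comm_form n E a b (k, l) * central_matrix n E \<phi> (k, l) r else 0)"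
    proof (cases "k < l")
      case True
      then show ?thesis
        using C_antisym comm_form_abel_matrix_ordered[OF \<phi> kl True]
        by (simp add: C_def comm_form_apply algebra_simps)
    qed (simp add: nonedge_def)
  qed
  also have "\<dots> = central_map n E \<phi> (comm_form n E a b) r"
    by (simp add: central_map_def sum_nonedges)
  finally show "comm_form n E (abel_map n E \<phi> a) (abel_map n E \<phi> b) r = central_map n E \<phi> (comm_form n E a b) r" .
qed

text \<open>The defect \<open>D\<close> below is additive, so it is determined by the abelianization; the factor 2
  symmetrizes the quadratic term without division, which needs \<open>comm_form_abel_map\<close>.\<close>

lemma central_hom_of_abel_zero:
  assumes c: "c \<in> carrier (G_Gamma n E)" and c0: "abel n E c = 0"
  shows "central n E (\<phi> c) = central_map n E \<phi> (central n E c)"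
proof -
  let ?A = "abel_map n E \<phi>" and ?L = "central_map n E \<phi>"
  define Q where "Q a b = cocycle n E (?A a) (?A b) - ?L (cocycle n E a b)" for a b
  define D where "D g = 2 * central n E (\<phi> g) - 2 * ?L (central n E g) - Q (abel n E g) (abel n E g)" for g
  have Q_sym: "Q a b = Q b a" for a b
    using comm_form_abel_map[of a b] by (simp add: Q_def comm_form_def central_map_diff algebra_simps)
  have Q_add: "Q (a + b) (a + b) = Q a a + 2 * Q a b + Q b b" for a b
    using Q_sym[of b a]
    by (simp add: Q_def abel_map_add cocycle_add_left cocycle_add_right central_map_add algebra_simps)
  have D_mult: "D (x \<otimes>\<^bsub>G_Gamma n E\<^esub> y) = D x + D y"
    if "x \<in> carrier (G_Gamma n E)" "y \<in> carrier (G_Gamma n E)" for x y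
    using that
    by (simp add: D_def Q_add central_mult abel_mult abel_hom_apply[OF \<phi>] central_map_add)
       (simp add: Q_def algebra_simps)
  have "D c q = 0" for q
    using additive_eq_sum_abel[where h = "\<lambda>g. D g q", OF _ c] D_mult c0 by simp
  then show ?thesis
    using c0 by (simp add: D_def Q_def fun_eq_iff)
qed

end

section \<open>Infinitely many twisted conjugacy classes\<close>

definition abel_fixed_vector :: "nat \<Rightarrow> nat set set \<Rightarrow> (gen word set \<Rightarrow> gen word set) \<Rightarrow> (nat \<Rightarrow> int) \<Rightarrow> bool" where
  "abel_fixed_vector n E \<phi> a \<longleftrightarrow> (\<exists>k\<in>{1..n}. a k \<noteq> 0) \<and> (\<forall>i\<in>{1..n}. abel_map n E \<phi> a i = a i)"

lemma infinite_twisted_classesI: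
  fixes G (structure)
  assumes G: "group G" and \<phi>: "\<phi> \<in> hom G G" and T: "T \<subseteq> carrier G"
    and invariant: "\<And>a b c. a \<in> T \<Longrightarrow> b \<in> T \<Longrightarrow> c \<in> carrier G \<Longrightarrow> a = c \<otimes> b \<otimes> inv (\<phi> c) \<Longrightarrow> F a = F b"
    and infinite: "infinite (F ` T)"
  shows "infinite (twisted_classes G \<phi>)"
proof
  assume finite: "finite (twisted_classes G \<phi>)"
  interpret group G by (rule G)
  interpret group_hom G G \<phi> using G \<phi> by (simp add: group_hom_def group_hom_axioms_def)
  define K where "K b = {a. \<exists>c\<in>carrier G. a = c \<otimes> b \<otimes> inv (\<phi> c)}" for b
  define choice where "choice C = F (SOME t. t \<in> T \<and> K t = C)" for C
  have "K ` T \<subseteq> twisted_classes G \<phi>"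
    using T by (auto simp: twisted_classes_def K_def)
  then have "finite (K ` T)"
    using finite by (rule finite_subset)
  moreover have "F ` T \<subseteq> choice ` K ` T"
  proof
    fix y assume "y \<in> F ` T"
    then obtain t where t: "t \<in> T" "y = F t" by blast
    define t' where "t' = (SOME s. s \<in> T \<and> K s = K t)"
    have t': "t' \<in> T" "K t' = K t"
      using someI[of "\<lambda>s. s \<in> T \<and> K s = K t", OF conjI[OF t(1) refl]] by (simp_all add: t'_def)
    have "t' \<in> K t'"
      using t'(1) T unfolding K_def by (intro CollectI bexI[of _ \<one>]) auto
    then have "t' \<in> K t"
      by (simp add: t'(2))
    then obtain c where "c \<in> carrier G" "t' = c \<otimes> t \<otimes> inv (\<phi> c)"
      by (auto simp: K_def)
    then have "y = choice (K t)"
      using invariant t t' by (simp add: choice_def t'_def)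
    then show "y \<in> choice ` K ` T" using t by blast
  qed
  ultimately show False
    using infinite by (meson finite_imageI finite_subset)
qed

lemma infinite_range_int_mult: "c \<noteq> 0 \<Longrightarrow> infinite (range (\<lambda>m::nat. int m * c))"
  by (rule range_inj_infinite) (simp add: inj_on_def)

context
  fixes n E \<phi>
  assumes \<phi>: "\<phi> \<in> hom (G_Gamma n E) (G_Gamma n E)"
begin

interpretation G: group "G_Gamma n E" by (rule group_G_Gamma)

lemma infinite_twisted_classes_of_abel_form:
  assumes k0: "k0 \<in> {1..n}" "u k0 \<noteq> 0"
    and invariant: "\<And>a. (\<Sum>i\<in>{1..n}. u i * abel_map n E \<phi> a i) = (\<Sum>i\<in>{1..n}. u i * a i)"
  shows "infinite (twisted_classes (G_Gamma n E) \<phi>)"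
proof -
  define F where "F g = (\<Sum>i\<in>{1..n}. u i * abel n E g i)" for g
  have F_mult: "F (x \<otimes>\<^bsub>G_Gamma n E\<^esub> y) = F x + F y"
    if "x \<in> carrier (G_Gamma n E)" "y \<in> carrier (G_Gamma n E)" for x y
    using that by (simp add: F_def abel_mult sum.distrib algebra_simps)
  have F_inv: "F (inv\<^bsub>G_Gamma n E\<^esub> x) = - F x" if "x \<in> carrier (G_Gamma n E)" for x
    using that by (simp add: F_def abel_inv sum_negf)
  have F_\<phi>: "F (\<phi> x) = F x" if "x \<in> carrier (G_Gamma n E)" for x
    using that invariant by (simp add: F_def abel_hom_apply[OF \<phi>])
  have F_pow: "F (x_gen n E k0 [^]\<^bsub>G_Gamma n E\<^esub> m) = int m * u k0" for m :: nat
  proof -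
    have "F (x_gen n E k0 [^]\<^bsub>G_Gamma n E\<^esub> m) = (\<Sum>i\<in>{1..n}. int m * (u i * unit_fun k0 i))"
      using k0 by (simp add: F_def abel_pow x_gen_carrier abel_x_gen mult.left_commute)
    also have "\<dots> = int m * u k0"
      using k0 by (simp add: sum_distrib_left[symmetric] sum_mult_unit_fun del: atLeastAtMost_iff)
    finally show ?thesis .
  qed
  show ?thesis
  proof (rule infinite_twisted_classesI[OF group_G_Gamma \<phi> subset_refl, of F])
    fix a b c assume "b \<in> carrier (G_Gamma n E)" "c \<in> carrier (G_Gamma n E)"
      and "a = c \<otimes>\<^bsub>G_Gamma n E\<^esub> b \<otimes>\<^bsub>G_Gamma n E\<^esub> inv\<^bsub>G_Gamma n E\<^esub> \<phi> c"
    then show "F a = F b"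
      using hom_in_carrier[OF \<phi>] by (simp add: F_mult F_inv F_\<phi>)
  next
    have "range (\<lambda>m::nat. int m * u k0) = F ` range (\<lambda>m::nat. x_gen n E k0 [^]\<^bsub>G_Gamma n E\<^esub> m)"
      by (simp add: F_pow image_image)
    also have "\<dots> \<subseteq> F ` carrier (G_Gamma n E)"
      using x_gen_carrier[OF k0(1)] by auto
    finally show "infinite (F ` carrier (G_Gamma n E))"
      using infinite_range_int_mult[OF k0(2)] finite_subset by blast
  qed
qed

lemma infinite_twisted_classes_of_abel_fixed:
  assumes "abel_fixed_vector n E \<phi> a"
  shows "infinite (twisted_classes (G_Gamma n E) \<phi>)"
proof -
  obtain k0 where a: "k0 \<in> {1..n}" "a k0 \<noteq> 0" and fixed: "\<And>i. i \<in> {1..n} \<Longrightarrow> abel_map n E \<phi> a i = a i"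
    using assms by (auto simp: abel_fixed_vector_def)
  obtain u where u: "\<exists>k\<in>{1..n}. u k \<noteq> 0"
    and u_fixed: "\<And>k. k \<in> {1..n} \<Longrightarrow> (\<Sum>i\<in>{1..n}. u i * abel_matrix n E \<phi> k i) = u k"
    using fixed_row_of_fixed_column[of "{1..n}" k0 a "\<lambda>i k. abel_matrix n E \<phi> k i"] a fixed
    by (auto simp: abel_map_def mult.commute)
  then obtain k1 where "k1 \<in> {1..n}" "u k1 \<noteq> 0" by blast
  then show ?thesis
  proof (rule infinite_twisted_classes_of_abel_form)
    fix b
    show "(\<Sum>i\<in>{1..n}. u i * abel_map n E \<phi> b i) = (\<Sum>i\<in>{1..n}. u i * b i)"
      using sum_fixed_column_form[of "{1..n}" "abel_matrix n E \<phi>" u b] u_fixed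
      by (simp add: abel_map_def mult.commute)
  qed
qed

lemma twisted_conj_abel_kernel:
  assumes no_abel_fixed: "\<And>a. \<not> abel_fixed_vector n E \<phi> a"
    and b: "b \<in> carrier (G_Gamma n E)" "abel n E b = 0" and c: "c \<in> carrier (G_Gamma n E)"
    and a: "a = c \<otimes>\<^bsub>G_Gamma n E\<^esub> b \<otimes>\<^bsub>G_Gamma n E\<^esub> inv\<^bsub>G_Gamma n E\<^esub> \<phi> c" "abel n E a = 0"
  shows "abel n E c = 0"
    and "central n E a = central n E b + (central n E c - central_map n E \<phi> (central n E c))"
proof -
  have \<phi>c: "\<phi> c \<in> carrier (G_Gamma n E)"
    using hom_in_carrier[OF \<phi> c] .
  have "abel n E a = abel n E c + abel n E b - abel_map n E \<phi> (abel n E c)"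
    using c b \<phi>c by (simp add: a(1) abel_mult abel_inv abel_hom_apply[OF \<phi>])
  then have "abel_map n E \<phi> (abel n E c) = abel n E c"
    using a(2) b by simp
  then show c0: "abel n E c = 0"
    using no_abel_fixed[of "abel n E c"] abel_outside[OF c] by (auto simp: abel_fixed_vector_def fun_eq_iff)
  show "central n E a = central n E b + (central n E c - central_map n E \<phi> (central n E c))"
    using c b \<phi>c c0
    by (simp add: a(1) central_mult central_inv abel_mult abel_inv abel_hom_apply[OF \<phi>]
        central_hom_of_abel_zero[OF \<phi> c c0])
qed

lemma infinite_twisted_classes_of_central_form:
  assumes no_abel_fixed: "\<And>a. \<not> abel_fixed_vector n E \<phi> a"
    and p0: "p0 \<in> nonedges n E" "f p0 \<noteq> 0"
    and invariant: "\<And>t. (\<Sum>q\<in>nonedges n E. f q * central_map n E \<phi> t q) = (\<Sum>q\<in>nonedges n E. f q * t q)"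
  shows "infinite (twisted_classes (G_Gamma n E) \<phi>)"
proof -
  define T where "T = {g \<in> carrier (G_Gamma n E). abel n E g = 0}"
  define F where "F g = (\<Sum>q\<in>nonedges n E. f q * central n E g q)" for g
  obtain i j where p0_eq: "p0 = (i, j)" and ij: "nonedge n E i j"
    using p0 by (auto simp: nonedges_def)
  show ?thesis
  proof (rule infinite_twisted_classesI[OF group_G_Gamma \<phi>, of T F])
    show "T \<subseteq> carrier (G_Gamma n E)" by (auto simp: T_def)
  next
    fix a b c assume "a \<in> T" "b \<in> T" and c: "c \<in> carrier (G_Gamma n E)"
      and "a = c \<otimes>\<^bsub>G_Gamma n E\<^esub> b \<otimes>\<^bsub>G_Gamma n E\<^esub> inv\<^bsub>G_Gamma n E\<^esub> \<phi> c"
    then have central_a: "central n E a = central n E b + (central n E c - central_map n E \<phi> (central n E c))"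
      using twisted_conj_abel_kernel(2)[OF no_abel_fixed _ _ c] by (auto simp: T_def)
    have "F a = F b + ((\<Sum>q\<in>nonedges n E. f q * central n E c q)
        - (\<Sum>q\<in>nonedges n E. f q * central_map n E \<phi> (central n E c) q))"
      by (simp add: F_def central_a algebra_simps sum.distrib sum_subtractf)
    then show "F a = F b"
      using invariant[of "central n E c"] by simp
  next
    have y: "y_gen n E i j \<in> carrier (G_Gamma n E)" "abel n E (y_gen n E i j) = 0"
      using y_gen_carrier[OF ij] abel_y_gen[OF ij] by simp_all
    have F_pow: "F (y_gen n E i j [^]\<^bsub>G_Gamma n E\<^esub> m) = int m * f p0" for m :: nat
    proof -
      have "F (y_gen n E i j [^]\<^bsub>G_Gamma n E\<^esub> m) = (\<Sum>q\<in>nonedges n E. int m * (f q * unit_fun p0 q))"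
        using y by (simp add: F_def central_pow central_y_gen[OF ij] p0_eq mult.left_commute)
      also have "\<dots> = int m * f p0"
        using p0 by (simp add: sum_distrib_left[symmetric] sum_mult_unit_fun)
      finally show ?thesis .
    qed
    have "range (\<lambda>m::nat. int m * f p0) = F ` range (\<lambda>m::nat. y_gen n E i j [^]\<^bsub>G_Gamma n E\<^esub> m)"
      by (simp add: F_pow image_image)
    also have "\<dots> \<subseteq> F ` T"
      using y by (auto simp: T_def abel_pow zero_fun_def)
    finally show "infinite (F ` T)"
      using infinite_range_int_mult[OF p0(2)] finite_subset by blast
  qed
qed

lemma infinite_twisted_classes_of_central_fixed:
  assumes no_abel_fixed: "\<And>a. \<not> abel_fixed_vector n E \<phi> a"
    and t: "p0 \<in> nonedges n E" "t p0 \<noteq> 0"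
    and fixed: "\<And>q. q \<in> nonedges n E \<Longrightarrow> central_map n E \<phi> t q = t q"
  shows "infinite (twisted_classes (G_Gamma n E) \<phi>)"
proof -
  obtain f where f: "\<exists>p\<in>nonedges n E. f p \<noteq> 0"
    and f_fixed: "\<And>p. p \<in> nonedges n E \<Longrightarrow> (\<Sum>q\<in>nonedges n E. f q * central_matrix n E \<phi> p q) = f p"
    using fixed_row_of_fixed_column[of "nonedges n E" p0 t "\<lambda>q p. central_matrix n E \<phi> p q"] t fixed
    by (auto simp: central_map_def mult.commute)
  then obtain p1 where "p1 \<in> nonedges n E" "f p1 \<noteq> 0" by blast
  with no_abel_fixed show ?thesis
  proof (rule infinite_twisted_classes_of_central_form)
    fix s
    show "(\<Sum>q\<in>nonedges n E. f q * central_map n E \<phi> s q) = (\<Sum>q\<in>nonedges n E. f q * s q)"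
      using sum_fixed_column_form[of "nonedges n E" "central_matrix n E \<phi>" f s] f_fixed
      by (simp add: central_map_def mult.commute)
  qed
qed

end

section \<open>Graphs with a unique vertex of degree n - 2\<close>

hide_const (open) Polynomial.degree

definition non_nbrs :: "nat \<Rightarrow> nat set set \<Rightarrow> nat \<Rightarrow> nat set" where
  "non_nbrs n E k = {j \<in> {1..n}. j \<noteq> k \<and> {k, j} \<notin> E}"

lemma card_non_nbrs:
  assumes "simple_graph n E" "k \<in> {1..n}"
  shows "card (non_nbrs n E k) + degree n E k + 1 = n"
proof -
  define nbrs where "nbrs = {j \<in> {1..n}. {k, j} \<in> E}"
  have "{k} \<notin> E"
    using assms(1) unfolding simple_graph_def by (metis doubleton_eq_iff insert_absorb2)
  then have nbrs_sub: "nbrs \<subseteq> {1..n} - {k}"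
    by (auto simp: nbrs_def)
  have "non_nbrs n E k = ({1..n} - {k}) - nbrs"
    by (auto simp: non_nbrs_def nbrs_def)
  then have "card (non_nbrs n E k) = (n - 1) - card nbrs"
    using nbrs_sub assms(2) by (simp add: card_Diff_subset finite_subset)
  moreover have "card nbrs \<le> n - 1"
    using card_mono[OF _ nbrs_sub] assms(2) by simp
  moreover have "degree n E k = card nbrs"
    by (simp add: Defs.degree_def nbrs_def)
  moreover have "1 \<le> n"
    using assms(2) by simp
  ultimately show ?thesis
    by linarith
qed

lemma non_nbr_nonedge:
  "j \<in> non_nbrs n E k \<Longrightarrow> k \<in> {1..n} \<Longrightarrow> nonedge n E (min k j) (max k j)"
  by (auto simp: non_nbrs_def nonedge_def min_def max_def insert_commute)

lemma nonedge_non_nbrs: "nonedge n E p q \<Longrightarrow> q \<in> non_nbrs n E p \<and> p \<in> non_nbrs n E q"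
  by (auto simp: non_nbrs_def nonedge_def insert_commute)

lemma comm_form_unit_fun_non_nbr:
  assumes "j \<in> non_nbrs n E k" "k \<in> {1..n}"
  shows "comm_form n E a (unit_fun j) (min k j, max k j) = (if k < j then - a k else a k)"
  using assms non_nbr_nonedge[OF assms]
  by (cases "k < j") (auto simp: comm_form_apply unit_fun_def min_def max_def non_nbrs_def)

lemma comm_form_unit_fun_other:
  "j \<noteq> k \<Longrightarrow> j \<noteq> l \<Longrightarrow> comm_form n E a (unit_fun j) (min k l, max k l) = 0"
  by (auto simp: comm_form_apply unit_fun_def min_def max_def)

lemma comm_form_abel_map_right:
  "comm_form n E a (abel_map n E \<phi> b) r = (\<Sum>k\<in>{1..n}. b k * comm_form n E a (abel_matrix n E \<phi> k) r)"
proof (cases r)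
  case (Pair r1 r2)
  then show ?thesis
    by (cases "nonedge n E r1 r2")
       (simp_all add: comm_form_apply abel_map_def sum_distrib_left sum_subtractf[symmetric] algebra_simps)
qed

locale unique_max_degree =
  fixes n :: nat and E :: "nat set set" and \<phi> :: "gen word set \<Rightarrow> gen word set" and v :: nat
  assumes simple: "simple_graph n E"
    and degree_le: "\<And>i. i \<in> {1..n} \<Longrightarrow> degree n E i + 2 \<le> n"
    and v: "v \<in> {1..n}" "degree n E v + 2 = n"
    and v_unique: "\<And>i. i \<in> {1..n} \<Longrightarrow> degree n E i + 2 = n \<Longrightarrow> i = v"
    and \<phi>_iso: "\<phi> \<in> iso (G_Gamma n E) (G_Gamma n E)"
begin

lemma card_non_nbrs_v: "card (non_nbrs n E v) = 1"
  using card_non_nbrs[OF simple v(1)] v(2) by simp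

definition w :: nat where
  "w = (THE w. non_nbrs n E v = {w})"

lemma non_nbrs_v: "non_nbrs n E v = {w}"
  using card_non_nbrs_v unfolding w_def by (rule card_1_singletonE) simp

lemma w: "w \<in> {1..n}" "w \<noteq> v"
  using non_nbrs_v by (auto simp: non_nbrs_def)

lemma edge_v: "j \<in> {1..n} \<Longrightarrow> j \<noteq> v \<Longrightarrow> j \<noteq> w \<Longrightarrow> {v, j} \<in> E"
  using non_nbrs_v by (auto simp: non_nbrs_def)

lemma two_non_nbrs:
  assumes "k \<in> {1..n}" "k \<noteq> v"
  obtains j1 j2 where "j1 \<in> non_nbrs n E k" "j2 \<in> non_nbrs n E k" "j1 \<noteq> j2"
proof -
  have "degree n E k + 3 \<le> n"
    using degree_le[OF assms(1)] v_unique[OF assms(1)] assms(2) by fastforce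
  then have "\<not> card (non_nbrs n E k) \<le> Suc 0"
    using card_non_nbrs[OF simple assms(1)] by simp
  moreover have "finite (non_nbrs n E k)"
    by (simp add: non_nbrs_def)
  ultimately show ?thesis
    using that card_le_Suc0_iff_eq by blast
qed

definition \<psi> :: "gen word set \<Rightarrow> gen word set" where
  "\<psi> = inv_into (carrier (G_Gamma n E)) \<phi>"

lemma \<phi>_hom: "\<phi> \<in> hom (G_Gamma n E) (G_Gamma n E)"
  using \<phi>_iso by (simp add: iso_def)

lemma \<psi>_hom: "\<psi> \<in> hom (G_Gamma n E) (G_Gamma n E)"
  using group.iso_set_sym[OF group_G_Gamma \<phi>_iso] by (simp add: \<psi>_def iso_def)

lemma \<phi>_\<psi>: "g \<in> carrier (G_Gamma n E) \<Longrightarrow> \<phi> (\<psi> g) = g"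
  using \<phi>_iso f_inv_into_f[of g \<phi> "carrier (G_Gamma n E)"] by (simp add: \<psi>_def iso_def bij_betw_def)

lemma \<psi>_\<phi>: "g \<in> carrier (G_Gamma n E) \<Longrightarrow> \<psi> (\<phi> g) = g"
  using \<phi>_iso by (auto simp: \<psi>_def iso_def bij_betw_def intro: inv_into_f_f)

abbreviation M :: "nat \<Rightarrow> nat \<Rightarrow> int" where
  "M \<equiv> abel_matrix n E \<phi>"

lemma comm_form_v:
  assumes "k \<in> {1..n}" "k \<noteq> w"
  shows "comm_form n E (M v) (M k) = 0"
  using assms comm_form_abel_matrix_edge[OF \<phi>_hom v(1) assms(1) edge_v[OF assms(1) _ assms(2)]]
  by (cases "k = v") (simp_all add: comm_form_def)

text \<open>Writing \<open>e\<^sub>j\<close> as a combination of the rows of \<open>M\<close> (using \<open>\<psi> = \<phi>\<^sup>-\<^sup>1\<close>), only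
  the row \<open>M w\<close> survives in the commutator with \<open>M v\<close>.\<close>

lemma comm_form_v_unit_fun:
  assumes j: "j \<in> {1..n}"
  shows "comm_form n E (M v) (unit_fun j) = (\<lambda>r. abel_matrix n E \<psi> j w * comm_form n E (M v) (M w) r)"
proof
  fix r
  have "comm_form n E (M v) (unit_fun j) r = comm_form n E (M v) (abel_map n E \<phi> (abel_matrix n E \<psi> j)) r"
    by (simp add: abel_map_abel_matrix_inverse[OF \<phi>_hom \<psi>_hom \<phi>_\<psi> j])
  also have "\<dots> = (\<Sum>k\<in>{1..n}. if k = w then abel_matrix n E \<psi> j w * comm_form n E (M v) (M w) r else 0)"
    unfolding comm_form_abel_map_right by (intro sum.cong refl) (simp add: comm_form_v)
  finally show "comm_form n E (M v) (unit_fun j) r = abel_matrix n E \<psi> j w * comm_form n E (M v) (M w) r"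
    using w(1) by simp
qed

text \<open>If \<open>M v k \<noteq> 0\<close> for some \<open>k \<noteq> v\<close>, take two non-neighbours \<open>j\<^sub>1 \<noteq> j\<^sub>2\<close> of \<open>k\<close> (they
  exist as \<open>v\<close> is the only vertex of degree \<open>n - 2\<close>). Then \<open>[M v, e\<^sub>j\<^sub>1]\<close> is nonzero at the
  non-edge \<open>{k, j\<^sub>1}\<close> but vanishes at \<open>{k, j\<^sub>2}\<close>, where \<open>[M v, e\<^sub>j\<^sub>2]\<close> is nonzero; so they
  cannot both be multiples of the same \<open>[M v, M w]\<close>.\<close>

lemma abel_matrix_v_outside:
  assumes "k \<noteq> v"
  shows "M v k = 0"
proof (cases "k \<in> {1..n}")
  case False
  then show ?thesis
    using abel_outside[OF hom_in_carrier[OF \<phi>_hom x_gen_carrier[OF v(1)]]] by (simp add: abel_matrix_def)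
next
  case True
  show ?thesis
  proof (rule ccontr)
    assume uk: "M v k \<noteq> 0"
    obtain j1 j2 where j: "j1 \<in> non_nbrs n E k" "j2 \<in> non_nbrs n E k" "j1 \<noteq> j2"
      using two_non_nbrs[OF True assms] .
    then have j_range: "j1 \<in> {1..n}" "j1 \<noteq> k" "j2 \<in> {1..n}" "j2 \<noteq> k"
      by (auto simp: non_nbrs_def)
    define C where "C = comm_form n E (M v) (M w)"
    have "abel_matrix n E \<psi> j1 w * C (min k j1, max k j1) \<noteq> 0"
      using comm_form_unit_fun_non_nbr[OF j(1) True, of "M v"] comm_form_v_unit_fun[OF j_range(1)] uk
      by (simp add: C_def fun_eq_iff split: if_splits)
    moreover have "abel_matrix n E \<psi> j1 w * C (min k j2, max k j2) = 0"
      using comm_form_unit_fun_other[of j1 k j2 n E "M v"] comm_form_v_unit_fun[OF j_range(1)] j_range j(3)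
      by (simp add: C_def fun_eq_iff)
    moreover have "abel_matrix n E \<psi> j2 w * C (min k j2, max k j2) \<noteq> 0"
      using comm_form_unit_fun_non_nbr[OF j(2) True, of "M v"] comm_form_v_unit_fun[OF j_range(3)] uk
      by (simp add: C_def fun_eq_iff split: if_splits)
    ultimately show False by simp
  qed
qed

definition \<delta> :: int where
  "\<delta> = M v v"

lemma abel_matrix_v: "M v = (\<lambda>i. \<delta> * unit_fun v i)"
  using abel_matrix_v_outside by (auto simp: fun_eq_iff unit_fun_def \<delta>_def)

lemma \<delta>_unit: "\<delta> = 1 \<or> \<delta> = -1"
proof -
  have "abel_map n E \<psi> (M v) = unit_fun v"
    by (rule abel_map_abel_matrix_inverse[OF \<psi>_hom \<phi>_hom \<psi>_\<phi> v(1)])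
  then have "\<delta> * abel_map n E \<psi> (unit_fun v) v = 1"
    by (simp add: abel_matrix_v abel_map_smult fun_eq_iff unit_fun_def)
  then show ?thesis
    using pos_zmult_eq_1_iff_lemma by blast
qed

definition p_vw :: "nat \<times> nat" where
  "p_vw = (min v w, max v w)"

lemma nonedge_p_vw: "nonedge n E (fst p_vw) (snd p_vw)"
  using non_nbr_nonedge[of w n E v] non_nbrs_v v(1) by (simp add: p_vw_def)

lemma p_vw_in_nonedges: "p_vw \<in> nonedges n E"
  using nonedge_p_vw by (simp add: nonedges_def case_prod_beta)

lemma nonedge_at_v: "nonedge n E q1 q2 \<Longrightarrow> (q1 = v \<longrightarrow> q2 = w) \<and> (q2 = v \<longrightarrow> q1 = w)"
  using nonedge_non_nbrs non_nbrs_v by blast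

lemma abel_matrix_w_column:
  assumes "j \<in> {1..n}" "j \<noteq> w"
  shows "M j w = 0"
proof -
  have "comm_form n E (M v) (M j) p_vw = 0"
    using comm_form_v[OF assms] by simp
  then show ?thesis
    using nonedge_p_vw \<delta>_unit w(2)
    by (cases "v < w") (auto simp: p_vw_def abel_matrix_v comm_form_apply unit_fun_def min_def max_def)
qed

definition \<epsilon> :: int where
  "\<epsilon> = M w w"

lemma abel_map_w: "abel_map n E \<phi> a w = a w * \<epsilon>"
proof -
  have "abel_map n E \<phi> a w = (\<Sum>k\<in>{1..n}. if k = w then a w * \<epsilon> else 0)"
    unfolding abel_map_def \<epsilon>_def by (intro sum.cong refl) (auto simp: abel_matrix_w_column)
  then show ?thesis
    using w(1) by simp
qed

lemma \<epsilon>_unit: "\<epsilon> = 1 \<or> \<epsilon> = -1"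
proof -
  have "abel_map n E \<phi> (abel_matrix n E \<psi> w) = unit_fun w"
    by (rule abel_map_abel_matrix_inverse[OF \<phi>_hom \<psi>_hom \<phi>_\<psi> w(1)])
  then have "\<epsilon> * abel_matrix n E \<psi> w w = 1"
    using abel_map_w by (metis unit_fun_def mult.commute)
  then show ?thesis
    by (rule pos_zmult_eq_1_iff_lemma)
qed

lemma central_matrix_p_vw:
  assumes "q \<in> nonedges n E"
  shows "central_matrix n E \<phi> p_vw q = \<delta> * \<epsilon> * unit_fun p_vw q"
proof -
  obtain q1 q2 where q: "q = (q1, q2)" "nonedge n E q1 q2"
    using assms by (auto simp: nonedges_def)
  have "central_matrix n E \<phi> p_vw = comm_form n E (M (snd p_vw)) (M (fst p_vw))"
    using central_matrix_nonedge[OF \<phi>_hom nonedge_p_vw] by simp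
  then show ?thesis
    using nonedge_at_v[OF q(2)] nonedge_range[OF q(2)] w(2)
    by (cases "v < w") (auto simp: q p_vw_def abel_matrix_v comm_form_apply unit_fun_def \<epsilon>_def)
qed

lemma \<delta>_eq_minus_one:
  assumes no_abel_fixed: "\<And>a. \<not> abel_fixed_vector n E \<phi> a"
  shows "\<delta> = -1"
proof (rule ccontr)
  assume "\<delta> \<noteq> -1"
  then have "abel_map n E \<phi> (unit_fun v) i = unit_fun v i" for i
    using \<delta>_unit by (simp add: abel_map_unit_fun[OF v(1)] abel_matrix_v)
  then have "abel_fixed_vector n E \<phi> (unit_fun v)"
    using v(1) by (auto simp: abel_fixed_vector_def unit_fun_def)
  then show False
    using no_abel_fixed by blast
qed

lemma infinite_twisted_classes: "infinite (twisted_classes (G_Gamma n E) \<phi>)"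
proof (cases "\<exists>a. abel_fixed_vector n E \<phi> a")
  case True
  then show ?thesis
    using infinite_twisted_classes_of_abel_fixed[OF \<phi>_hom] by blast
next
  case False
  then have no_abel_fixed: "\<And>a. \<not> abel_fixed_vector n E \<phi> a"
    by blast
  have "\<delta> = -1"
    using no_abel_fixed by (rule \<delta>_eq_minus_one)
  consider "\<epsilon> = 1" | "\<epsilon> = -1"
    using \<epsilon>_unit by blast
  then show ?thesis
  proof cases
    case 1
    show ?thesis
    proof (rule infinite_twisted_classes_of_abel_form[OF \<phi>_hom w(1), where u = "unit_fun w"])
      show "unit_fun w w \<noteq> 0"
        by (simp add: unit_fun_def)
      fix a
      show "(\<Sum>i\<in>{1..n}. unit_fun w i * abel_map n E \<phi> a i) = (\<Sum>i\<in>{1..n}. unit_fun w i * a i)"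
        using w(1) 1 by (simp add: sum_unit_fun_mult abel_map_w del: atLeastAtMost_iff)
    qed
  next
    case 2
    show ?thesis
    proof (rule infinite_twisted_classes_of_central_fixed[OF \<phi>_hom no_abel_fixed p_vw_in_nonedges,
          where t = "unit_fun p_vw"])
      show "unit_fun p_vw p_vw \<noteq> 0"
        by (simp add: unit_fun_def)
      fix q assume "q \<in> nonedges n E"
      then show "central_map n E \<phi> (unit_fun p_vw) q = unit_fun p_vw q"
        using 2 \<open>\<delta> = -1\<close> p_vw_in_nonedges
        by (simp add: central_map_def sum_unit_fun_mult central_matrix_p_vw)
    qed
  qed
qed

end

theorem theorem4p4:
  fixes n :: nat and E :: "nat set set"
  assumes "simple_graph n E"
    and "\<forall>i\<in>{1..n}. degree n E i + 2 \<le> n"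
    and "\<exists>!i. i \<in> {1..n} \<and> degree n E i + 2 = n"
  shows "R_infty (G_Gamma n E)"
proof -
  obtain v where v: "v \<in> {1..n}" "degree n E v + 2 = n"
    and v_unique: "\<And>i. i \<in> {1..n} \<Longrightarrow> degree n E i + 2 = n \<Longrightarrow> i = v"
    using assms(3) by (metis (no_types, lifting))
  show ?thesis
    unfolding R_infty_def
  proof
    fix \<phi> assume "\<phi> \<in> iso (G_Gamma n E) (G_Gamma n E)"
    with assms(1,2) v v_unique interpret unique_max_degree n E \<phi> v
      unfolding unique_max_degree_def by blast
    show "infinite (twisted_classes (G_Gamma n E) \<phi>)"
      by (rule infinite_twisted_classes)
  qed
qed

end
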